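(* Let $(X,d)$ be a compact metric space and let $f:X\to X$ be an arbitrary map (no continuity assumed). If $(C_k)_{k\in\mathbb{N}}$ is a sequence of chain components in $\mathfrak{C}_f$ such that $C_{k+1}\prec C_k$ for every $k$, then there is a chain component $C\in\mathfrak{C}_f$ with $C\prec C_k$ for every $k\in\mathbb{N}$.
   Context: For a metric space $(X,d)$ and map $f:X\to X$: an $\varepsilon$-chain from $x$ to $y$ is a finite sequence $x_0=x,\dots,x_n=y$, $n\ge1$, with $d(f(x_i),x_{i+1})<\varepsilon$; $x\,\mathcal{C}\,y$ iff for every $\varepsilon>0$ there is an $\varepsilon$-chain from $x$ to $y$; $CR_f=\{x:x\,\mathcal{C}\,x\}$; $x\,E\,y$ iff $x\,\mathcal{C}\,y$ and $y\,\mathcal{C}\,x$; $\mathfrak{C}_f=CR_f/E$ is the set of chain components, partially ordered by $[x]\preceq[y]$ iff $y\,\mathcal{C}\,x$; $\prec$ denotes $\preceq$ together with $\neq$. *)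

theory Defs
  imports "HOL-Analysis.Analysis"
begin

definition eps_chain :: "('a::metric_space \<Rightarrow> 'a) \<Rightarrow> real \<Rightarrow> 'a \<Rightarrow> 'a \<Rightarrow> bool" where
  "eps_chain f \<epsilon> x y \<longleftrightarrow>
     (\<exists>n::nat. \<exists>xs::nat \<Rightarrow> 'a. n \<ge> 1 \<and> xs 0 = x \<and> xs n = y \<and>
        (\<forall>i<n. dist (f (xs i)) (xs (Suc i)) < \<epsilon>))"

definition chain_rel :: "('a::metric_space \<Rightarrow> 'a) \<Rightarrow> 'a \<Rightarrow> 'a \<Rightarrow> bool" where
  "chain_rel f x y \<longleftrightarrow> (\<forall>\<epsilon>>0. eps_chain f \<epsilon> x y)"

definition CR :: "('a::metric_space \<Rightarrow> 'a) \<Rightarrow> 'a set" where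
  "CR f = {x. chain_rel f x x}"

definition chainE :: "('a::metric_space \<Rightarrow> 'a) \<Rightarrow> ('a \<times> 'a) set" where
  "chainE f = {(x, y). x \<in> CR f \<and> y \<in> CR f \<and> chain_rel f x y \<and> chain_rel f y x}"

definition chain_components :: "('a::metric_space \<Rightarrow> 'a) \<Rightarrow> 'a set set" where
  "chain_components f = CR f // chainE f"

definition comp_le :: "('a::metric_space \<Rightarrow> 'a) \<Rightarrow> 'a set \<Rightarrow> 'a set \<Rightarrow> bool" where
  "comp_le f A B \<longleftrightarrow> (\<exists>x\<in>A. \<exists>y\<in>B. chain_rel f y x)"

definition comp_less :: "('a::metric_space \<Rightarrow> 'a) \<Rightarrow> 'a set \<Rightarrow> 'a set \<Rightarrow> bool" where
  "comp_less f A B \<longleftrightarrow> comp_le f A B \<and> A \<noteq> B"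

end

theory Submission
  imports Defs
begin

text \<open>Pick representatives \<open>c\<^sub>k\<close> of the components \<open>C\<^sub>k\<close>; then \<open>c\<^sub>k \<C> c\<^sub>k\<^sub>+\<^sub>1\<close> but not
  \<open>c\<^sub>k\<^sub>+\<^sub>1 \<C> c\<^sub>k\<close>. Since the set of chain successors of a point is closed, any limit
  point \<open>l\<close> of \<open>(c\<^sub>k)\<close> satisfies \<open>c\<^sub>k \<C> l\<close> for all \<open>k\<close>. In a compact space every point has a
  chain recurrent chain successor: take a successor \<open>y\<^sub>0\<close> of \<open>l\<close> whose successor set is minimal
  (Zorn's lemma, chains being handled by compactness); the successor set of \<open>y = f y\<^sub>0\<close> is contained
  in that of \<open>y\<^sub>0\<close>, hence equal to it, hence contains \<open>y\<close>. The component of \<open>y\<close> lies strictly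
  below every \<open>C\<^sub>k\<close>, because \<open>y \<C> c\<^sub>k\<close> would give \<open>c\<^sub>k\<^sub>+\<^sub>1 \<C> l \<C> y \<C> c\<^sub>k\<close>.\<close>

definition chain_successors :: "('a::metric_space \<Rightarrow> 'a) \<Rightarrow> 'a \<Rightarrow> 'a set" where
  "chain_successors f x = {y. chain_rel f x y}"

lemma eps_chain_trans:
  assumes "eps_chain f e x y" "eps_chain f e y z"
  shows "eps_chain f e x z"
proof -
  obtain n xs where n: "n \<ge> 1" "xs 0 = x" "xs n = y" "\<forall>i<n. dist (f (xs i)) (xs (Suc i)) < e"
    using assms(1) unfolding eps_chain_def by blast
  obtain m ys where m: "m \<ge> 1" "ys 0 = y" "ys m = z" "\<forall>i<m. dist (f (ys i)) (ys (Suc i)) < e"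
    using assms(2) unfolding eps_chain_def by blast
  define zs where "zs i = (if i \<le> n then xs i else ys (i - n))" for i
  have "dist (f (zs i)) (zs (Suc i)) < e" if "i < n + m" for i
  proof (cases "i < n")
    case True
    then show ?thesis using n(4) by (simp add: zs_def)
  next
    case False
    then have "zs i = ys (i - n)" "zs (Suc i) = ys (Suc (i - n))"
      using n(3) m(2) by (auto simp: zs_def Suc_diff_le)
    then show ?thesis using m(4) that False by simp
  qed
  moreover have "zs 0 = x" "zs (n + m) = z" using n m by (auto simp: zs_def)
  ultimately show ?thesis unfolding eps_chain_def using n(1) by (metis le_add1 order_trans)
qed

lemma chain_rel_trans: "chain_rel f x y \<Longrightarrow> chain_rel f y z \<Longrightarrow> chain_rel f x z"
  unfolding chain_rel_def using eps_chain_trans by blast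

lemma chain_rel_image: "chain_rel f x (f x)"
  unfolding chain_rel_def eps_chain_def
  by (intro allI impI exI[of _ 1] exI[of _ "\<lambda>i. if i = 0 then x else f x"]) auto

lemma eps_chain_move_end:
  assumes "eps_chain f e x y" "dist y z < d"
  shows "eps_chain f (e + d) x z"
proof -
  obtain n xs where n: "n \<ge> 1" "xs 0 = x" "xs n = y" "\<forall>i<n. dist (f (xs i)) (xs (Suc i)) < e"
    using assms(1) unfolding eps_chain_def by blast
  have "d > 0" using assms(2) zero_le_dist[of y z] by linarith
  have "dist (f (xs i)) ((xs(n := z)) (Suc i)) < e + d" if "i < n" for i
  proof (cases "Suc i = n")
    case True
    have "dist (f (xs i)) z \<le> dist (f (xs i)) y + dist y z" by (rule dist_triangle)
    then show ?thesis using n(3,4) that True assms(2) by fastforce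
  next
    case False
    then show ?thesis using n(4) that \<open>d > 0\<close> by fastforce
  qed
  then show ?thesis
    unfolding eps_chain_def using n(1,2) by (intro exI[of _ n] exI[of _ "xs(n := z)"]) auto
qed

lemma chain_successors_trans: "y \<in> chain_successors f x \<Longrightarrow> chain_successors f y \<subseteq> chain_successors f x"
  unfolding chain_successors_def using chain_rel_trans by blast

lemma image_in_chain_successors: "f x \<in> chain_successors f x"
  unfolding chain_successors_def using chain_rel_image by blast

lemma closed_chain_successors: "closed (chain_successors f x)"
proof -
  have "chain_rel f x z" if z: "z \<in> closure (chain_successors f x)" for z
    unfolding chain_rel_def
  proof (intro allI impI)
    fix e :: real
    assume "e > 0"
    then obtain y where "chain_rel f x y" "dist y z < e / 2"
      using z unfolding closure_approachable chain_successors_def by (metis half_gt_zero mem_Collect_eq)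
    then have "eps_chain f (e / 2 + e / 2) x z"
      using eps_chain_move_end \<open>e > 0\<close> unfolding chain_rel_def by (metis half_gt_zero)
    then show "eps_chain f e x z" by simp
  qed
  then show ?thesis
    using closure_subset_eq unfolding chain_successors_def by blast
qed

lemma compact_space_closed_chain_Inter_nonempty:
  fixes \<F> :: "'a::topological_space set set"
  assumes "compact (UNIV :: 'a set)"
    and "\<And>S. S \<in> \<F> \<Longrightarrow> closed S" "{} \<notin> \<F>"
    and "\<And>S T. S \<in> \<F> \<Longrightarrow> T \<in> \<F> \<Longrightarrow> S \<subseteq> T \<or> T \<subseteq> S"
  shows "\<Inter>\<F> \<noteq> {}"
proof -
  have "UNIV \<inter> \<Inter>\<F> \<noteq> {}"
  proof (rule compact_imp_fip[OF assms(1)])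
    fix \<F>' assume \<F>': "finite \<F>'" "\<F>' \<subseteq> \<F>"
    show "UNIV \<inter> \<Inter>\<F>' \<noteq> {}"
    proof (cases "\<F>' = {}")
      case False
      have "subset.chain \<F> \<F>'"
        using \<F>'(2) assms(4) unfolding subset.chain_def by blast
      then have "\<Inter>\<F>' \<in> \<F>" using Inter_in_chain[OF \<F>'(1) False] \<F>'(2) by blast
      then show ?thesis using assms(3) by auto
    qed simp
  qed (use assms(2) in blast)
  then show ?thesis by simp
qed

lemma minimal_chain_successors:
  fixes f :: "'a::metric_space \<Rightarrow> 'a"
  assumes "compact (UNIV :: 'a set)"
  obtains y where "y \<in> chain_successors f x"
    and "\<And>w. w \<in> chain_successors f x \<Longrightarrow> chain_successors f w \<subseteq> chain_successors f y \<Longrightarrow>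
           chain_successors f w = chain_successors f y"
proof -
  define \<A> where "\<A> = chain_successors f ` chain_successors f x"
  have po: "partial_order_on \<A> (relation_of (\<supseteq>) \<A>)"
    by (rule partial_order_on_relation_ofI) auto
  have chain_bounded: "\<exists>U\<in>\<A>. \<forall>S\<in>\<C>. S \<supseteq> U" if "\<C> \<in> Chains (relation_of (\<supseteq>) \<A>)" for \<C>
  proof (cases "\<C> = {}")
    case True
    then show ?thesis unfolding \<A>_def using image_in_chain_successors by blast
  next
    case False
    have "\<C> \<subseteq> \<A>" using Chains_relation_of[OF that] .
    have "\<Inter>\<C> \<noteq> {}"
    proof (rule compact_space_closed_chain_Inter_nonempty[OF assms])
      show "S \<subseteq> T \<or> T \<subseteq> S" if "S \<in> \<C>" "T \<in> \<C>" for S T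
        using \<open>\<C> \<in> Chains _\<close> that unfolding Chains_def relation_of_def by blast
      show "closed S" if "S \<in> \<C>" for S
        using that \<open>\<C> \<subseteq> \<A>\<close> closed_chain_successors unfolding \<A>_def by blast
      show "{} \<notin> \<C>"
        using \<open>\<C> \<subseteq> \<A>\<close> image_in_chain_successors unfolding \<A>_def by blast
    qed
    then obtain w where w: "w \<in> \<Inter>\<C>" by blast
    obtain y\<^sub>0 where "y\<^sub>0 \<in> chain_successors f x" "chain_successors f y\<^sub>0 \<in> \<C>"
      using False \<open>\<C> \<subseteq> \<A>\<close> unfolding \<A>_def by blast
    then have "w \<in> chain_successors f x"
      using w chain_successors_trans by blast
    then have "chain_successors f w \<in> \<A>" unfolding \<A>_def by (rule imageI)
    moreover have "chain_successors f w \<subseteq> S" if S: "S \<in> \<C>" for S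
    proof -
      obtain y where "S = chain_successors f y" using S \<open>\<C> \<subseteq> \<A>\<close> unfolding \<A>_def by blast
      then show ?thesis using S w chain_successors_trans by blast
    qed
    ultimately show ?thesis by blast
  qed
  obtain M where "M \<in> \<A>" and M_min: "\<forall>S\<in>\<A>. S \<subseteq> M \<longrightarrow> S = M"
    using predicate_Zorn[OF po chain_bounded] by blast
  then obtain y where "y \<in> chain_successors f x" "M = chain_successors f y" unfolding \<A>_def by blast
  then show ?thesis using that M_min unfolding \<A>_def by blast
qed

lemma chain_recurrent_successor:
  fixes f :: "'a::metric_space \<Rightarrow> 'a"
  assumes "compact (UNIV :: 'a set)"
  obtains y where "chain_rel f x y" "y \<in> CR f"
proof -
  obtain y where y: "y \<in> chain_successors f x"
    and min: "\<And>w. w \<in> chain_successors f x \<Longrightarrow> chain_successors f w \<subseteq> chain_successors f y \<Longrightarrow>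
           chain_successors f w = chain_successors f y"
    using minimal_chain_successors[OF assms] by blast
  have "f y \<in> chain_successors f x" "chain_successors f (f y) \<subseteq> chain_successors f y"
    using y image_in_chain_successors chain_successors_trans by blast+
  then have "f y \<in> chain_successors f (f y)"
    using min image_in_chain_successors by metis
  then show ?thesis
    using that \<open>f y \<in> chain_successors f x\<close> unfolding chain_successors_def CR_def by blast
qed

lemma chain_rel_limit_point:
  fixes f :: "'a::metric_space \<Rightarrow> 'a"
  assumes "compact (UNIV :: 'a set)" "\<And>k. chain_rel f (c k) (c (Suc k))"
  obtains l where "\<And>k. chain_rel f (c k) l"
proof -
  have forward: "chain_rel f (c k) (c m)" if "k < m" for k m
    using that by (induction rule: less_Suc_induct) (use assms(2) chain_rel_trans in blast)+
  obtain l r where r: "strict_mono r" "(c \<circ> r) \<longlonglongrightarrow> l"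
    using compact_imp_seq_compact[OF assms(1)] by (metis UNIV_I seq_compactE)
  have "l \<in> chain_successors f (c k)" for k
  proof (rule Lim_in_closed_set[OF closed_chain_successors _ _ r(2)])
    have "k < r n" if "n \<ge> Suc k" for n
      using seq_suble[OF r(1), of n] that by linarith
    then show "\<forall>\<^sub>F n in sequentially. (c \<circ> r) n \<in> chain_successors f (c k)"
      using forward unfolding chain_successors_def by (auto intro: eventually_sequentiallyI)
  qed simp
  then show ?thesis using that unfolding chain_successors_def by blast
qed

lemma chainE_class_iff:
  "y \<in> chainE f `` {x} \<longleftrightarrow> x \<in> CR f \<and> y \<in> CR f \<and> chain_rel f x y \<and> chain_rel f y x"
  unfolding chainE_def by auto

lemma equiv_chainE: "equiv (CR f) (chainE f)"
proof (rule equivI)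
  show "chainE f \<subseteq> CR f \<times> CR f" "refl_on (CR f) (chainE f)" "sym (chainE f)"
    unfolding chainE_def refl_on_def sym_def CR_def by auto
  show "trans (chainE f)"
    unfolding chainE_def trans_def by (blast intro: chain_rel_trans)
qed

lemma comp_less_classes_iff:
  assumes "x \<in> CR f" "y \<in> CR f"
  shows "comp_less f (chainE f `` {x}) (chainE f `` {y}) \<longleftrightarrow> chain_rel f y x \<and> \<not> chain_rel f x y"
proof -
  have "comp_le f (chainE f `` {x}) (chainE f `` {y}) \<longleftrightarrow> chain_rel f y x"
  proof
    assume "comp_le f (chainE f `` {x}) (chainE f `` {y})"
    then obtain a b where "chain_rel f a x" "chain_rel f y b" "chain_rel f b a"
      unfolding comp_le_def Bex_def chainE_class_iff by blast
    then show "chain_rel f y x" using chain_rel_trans by blast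
  next
    assume "chain_rel f y x"
    then show "comp_le f (chainE f `` {x}) (chainE f `` {y})"
      unfolding comp_le_def using equiv_class_self[OF equiv_chainE] assms by blast
  qed
  moreover have "chainE f `` {x} = chainE f `` {y} \<longleftrightarrow> chain_rel f x y \<and> chain_rel f y x"
    unfolding eq_equiv_class_iff[OF equiv_chainE assms] using assms by (simp add: chainE_def)
  ultimately show ?thesis unfolding comp_less_def by blast
qed

theorem theorem3p6:
  fixes f :: "'a::metric_space \<Rightarrow> 'a"
    and C :: "nat \<Rightarrow> 'a set"
  assumes "compact (UNIV :: 'a set)"
    and "\<And>k. C k \<in> chain_components f"
    and "\<And>k. comp_less f (C (Suc k)) (C k)"
  shows "\<exists>D \<in> chain_components f. \<forall>k. comp_less f D (C k)"
proof -
  have "\<exists>c. c \<in> CR f \<and> C k = chainE f `` {c}" for k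
    using assms(2)[of k] unfolding chain_components_def quotient_def by blast
  then obtain c where c: "\<And>k. c k \<in> CR f" "\<And>k. C k = chainE f `` {c k}"
    by metis
  have down: "chain_rel f (c k) (c (Suc k))" "\<not> chain_rel f (c (Suc k)) (c k)" for k
    using assms(3)[of k] by (simp_all add: c comp_less_classes_iff)
  obtain l where l: "\<And>k. chain_rel f (c k) l"
    using chain_rel_limit_point[where c = c, OF assms(1) down(1)] by blast
  obtain y where y: "chain_rel f l y" "y \<in> CR f"
    using chain_recurrent_successor[OF assms(1)] by blast
  have "comp_less f (chainE f `` {y}) (C k)" for k
  proof -
    have "chain_rel f (c k) y" using l y(1) chain_rel_trans by blast
    moreover have "\<not> chain_rel f y (c k)"
      using l[of "Suc k"] y(1) down(2)[of k] chain_rel_trans by blast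
    ultimately show ?thesis by (simp add: c y(2) comp_less_classes_iff)
  qed
  moreover have "chainE f `` {y} \<in> chain_components f"
    unfolding chain_components_def using y(2) by (rule quotientI)
  ultimately show ?thesis by blast
qed

end
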